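(* Let $c>2$ be a constant. For all sufficiently large $n$ and all $p$ with $\frac{c\log n}{n}\le p\le 1$, we have $R(n,p)\ge 1-\frac{1.5}{n}$.
   Context: $\mathcal{G}_{n,p}$ denotes the random directed graph on $n$ vertices in which each ordered pair of distinct vertices is an edge independently with probability $p$. Fix one vertex as the target. $R(n,p)$ is the probability that every vertex of a random graph from $\mathcal{G}_{n,p}$ has a directed path to the target vertex. $\log$ is the natural logarithm. *)

theory Defs
  imports Complex_Main
begin

text \<open>Vertices of a digraph on n vertices are 0,...,n-1; the possible (ordered) edges
  are the pairs of distinct vertices. The target vertex is 0.\<close>

definition possible_edges :: "nat \<Rightarrow> (nat \<times> nat) set" where
  "possible_edges n = {(u, v). u < n \<and> v < n \<and> u \<noteq> v}"

definition all_reach_target :: "nat \<Rightarrow> (nat \<times> nat) set \<Rightarrow> bool" where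
  "all_reach_target n E = (\<forall>v<n. (v, 0) \<in> E\<^sup>*)"

text \<open>Probability of an edge set E under G(n,p): each possible edge present
  independently with probability p.\<close>
definition gnp_prob :: "nat \<Rightarrow> real \<Rightarrow> (nat \<times> nat) set \<Rightarrow> real" where
  "gnp_prob n p E = p ^ card E * (1 - p) ^ (card (possible_edges n) - card E)"

definition R :: "nat \<Rightarrow> real \<Rightarrow> real" where
  "R n p = (\<Sum>E\<in>Pow (possible_edges n). if all_reach_target n E then gnp_prob n p E else 0)"

end

theory Submission
  imports Defs "HOL-Real_Asymp.Real_Asymp"
begin

text \<open>If some vertex cannot reach the target, the set \<open>S\<close> of all such vertices is nonempty,
  misses the target and has none of its \<open>|S| (n - |S|)\<close> possible out-going edges, an event of
  probability \<open>(1 - p)^(|S| (n - |S|))\<close>. A union bound over \<open>S\<close>, grouped by \<open>k = |S|\<close>, gives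
  \<open>1 - R(n,p) \<le> \<Sum>k. C(n-1,k) (1-p)^(k (n-k))\<close>. With \<open>m = min k (n - k)\<close> and
  \<open>p \<ge> c log n / n\<close> each term is at most \<open>n^(m (1 - c (n-m)/n))\<close>; for \<open>m\<close> below a constant
  \<open>K\<close> this is at most \<open>n^-(1+d)\<close> with \<open>d = c/2 - 1 > 0\<close>, and for \<open>m \<ge> K\<close> at most \<open>n^-3\<close>.
  The sum is therefore at most \<open>2K n^-(1+d) + n^-2 \<le> 1.5/n\<close> for large \<open>n\<close>.\<close>

lemma sum_Pow_card:
  fixes g :: "nat \<Rightarrow> 'a::comm_semiring_1"
  assumes "finite A"
  shows "(\<Sum>S\<in>Pow A. g (card S)) = (\<Sum>k\<le>card A. of_nat (card A choose k) * g k)"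
proof -
  have "card ` Pow A \<subseteq> {..card A}"
    using assms by (auto intro: card_mono)
  then have "(\<Sum>S\<in>Pow A. g (card S)) = (\<Sum>k\<le>card A. \<Sum>S\<in>{S \<in> Pow A. card S = k}. g (card S))"
    using assms by (intro sum.group[symmetric]) auto
  also have "\<dots> = (\<Sum>k\<le>card A. of_nat (card A choose k) * g k)"
  proof (rule sum.cong)
    fix k
    have "{S \<in> Pow A. card S = k} = {S. S \<subseteq> A \<and> card S = k}" by auto
    then show "(\<Sum>S\<in>{S \<in> Pow A. card S = k}. g (card S)) = of_nat (card A choose k) * g k"
      using n_subsets[OF assms, of k] by simp
  qed simp
  finally show ?thesis .
qed

lemma sum_Pow_binomial:
  fixes p q :: "'a::comm_semiring_1"
  assumes "finite A"
  shows "(\<Sum>E\<in>Pow A. p ^ card E * q ^ (card A - card E)) = (p + q) ^ card A"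
  using sum_Pow_card[OF assms, of "\<lambda>k. p ^ k * q ^ (card A - k)"]
  by (simp add: binomial_ring mult.assoc)

lemma sum_Pow_nonempty_card:
  fixes g :: "nat \<Rightarrow> 'a::comm_ring_1"
  assumes "finite A"
  shows "(\<Sum>S\<in>Pow A - {{}}. g (card S)) = (\<Sum>k\<in>{1..card A}. of_nat (card A choose k) * g k)"
proof -
  have "(\<Sum>S\<in>Pow A - {{}}. g (card S)) = (\<Sum>S\<in>Pow A. g (card S)) - g 0"
    using assms by (simp add: sum_diff1)
  also have "\<dots> = (\<Sum>k\<in>{1..card A}. of_nat (card A choose k) * g k)"
    using assms by (simp add: sum_Pow_card atMost_atLeast0 sum.atLeast_Suc_atMost)
  finally show ?thesis .
qed

lemma sum_Pow_disjoint:
  fixes p q :: "'a::comm_semiring_1"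
  assumes "finite A" and "B \<subseteq> A"
  shows "(\<Sum>E | E \<subseteq> A \<and> E \<inter> B = {}. p ^ card E * q ^ (card A - card E))
           = (p + q) ^ (card A - card B) * q ^ card B"
proof -
  have "{E. E \<subseteq> A \<and> E \<inter> B = {}} = Pow (A - B)" by auto
  moreover have "card A - card E = (card (A - B) - card E) + card B" if "E \<subseteq> A - B" for E
    using assms that card_mono[of "A - B" E] card_mono[of A B]
    by (simp add: card_Diff_subset finite_subset)
  ultimately have "(\<Sum>E | E \<subseteq> A \<and> E \<inter> B = {}. p ^ card E * q ^ (card A - card E))
      = (\<Sum>E\<in>Pow (A - B). p ^ card E * q ^ (card (A - B) - card E)) * q ^ card B"
    by (simp add: sum_distrib_right power_add mult.assoc)
  also have "\<dots> = (p + q) ^ (card A - card B) * q ^ card B"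
    using assms sum_Pow_binomial[of "A - B" p q] by (simp add: card_Diff_subset finite_subset)
  finally show ?thesis .
qed

lemma finite_possible_edges: "finite (possible_edges n)"
proof (rule finite_subset)
  show "possible_edges n \<subseteq> {..<n} \<times> {..<n}" unfolding possible_edges_def by auto
qed simp

lemma gnp_prob_nonneg: "0 \<le> p \<Longrightarrow> p \<le> 1 \<Longrightarrow> 0 \<le> gnp_prob n p E"
  unfolding gnp_prob_def by simp

lemma sum_gnp_prob: "(\<Sum>E\<in>Pow (possible_edges n). gnp_prob n p E) = 1"
  using sum_Pow_binomial[OF finite_possible_edges, of p "1 - p"] by (simp add: gnp_prob_def)

lemma sum_gnp_prob_disjoint:
  assumes "B \<subseteq> possible_edges n"
  shows "(\<Sum>E | E \<subseteq> possible_edges n \<and> E \<inter> B = {}. gnp_prob n p E) = (1 - p) ^ card B"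
  using sum_Pow_disjoint[OF finite_possible_edges assms, of p "1 - p"] by (simp add: gnp_prob_def)

lemma not_all_reach_target_obtains_closed_set:
  assumes "\<not> all_reach_target n E"
  obtains S where "S \<subseteq> {1..<n}" "S \<noteq> {}" "E \<inter> S \<times> ({..<n} - S) = {}"
proof
  let ?S = "{v. v < n \<and> (v, 0) \<notin> E\<^sup>*}"
  show "?S \<subseteq> {1..<n}" by (auto simp: Suc_le_eq intro: gr0I)
  show "?S \<noteq> {}" using assms unfolding all_reach_target_def by auto
  show "E \<inter> ?S \<times> ({..<n} - ?S) = {}"
    by (auto intro: converse_rtrancl_into_rtrancl)
qed

lemma one_minus_R_le_sum_closed_sets:
  assumes "0 \<le> p" "p \<le> 1"
  shows "1 - R n p \<le> (\<Sum>S\<in>Pow {1..<n} - {{}}. (1 - p) ^ (card S * (n - card S)))"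
proof -
  let ?PE = "possible_edges n" and ?SS = "Pow {1..<n} - {{}}"
  let ?cut = "\<lambda>S. S \<times> ({..<n} - S)"
  let ?avoid = "\<lambda>S E. if E \<inter> ?cut S = {} then gnp_prob n p E else 0"
  have "1 - R n p = (\<Sum>E\<in>Pow ?PE. if all_reach_target n E then 0 else gnp_prob n p E)"
    unfolding R_def sum_gnp_prob[symmetric, of n p] sum_subtractf[symmetric]
    by (rule sum.cong) auto
  also have "\<dots> \<le> (\<Sum>E\<in>Pow ?PE. \<Sum>S\<in>?SS. ?avoid S E)"
  proof (rule sum_mono)
    fix E
    show "(if all_reach_target n E then 0 else gnp_prob n p E) \<le> (\<Sum>S\<in>?SS. ?avoid S E)"
    proof (cases "all_reach_target n E")
      case False
      then obtain S where "S \<in> ?SS" "E \<inter> ?cut S = {}"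
        by (rule not_all_reach_target_obtains_closed_set) auto
      then show ?thesis
        using False member_le_sum[of S ?SS "\<lambda>S. ?avoid S E"] gnp_prob_nonneg[OF assms] by simp
    qed (simp add: sum_nonneg gnp_prob_nonneg[OF assms])
  qed
  also have "\<dots> = (\<Sum>S\<in>?SS. \<Sum>E\<in>Pow ?PE. ?avoid S E)"
    by (rule sum.swap)
  also have "\<dots> = (\<Sum>S\<in>?SS. (1 - p) ^ (card S * (n - card S)))"
  proof (rule sum.cong)
    fix S assume "S \<in> ?SS"
    then have S: "S \<subseteq> {..<n}" "finite S" by (auto intro: finite_subset)
    have "?cut S \<subseteq> ?PE" using S unfolding possible_edges_def by auto
    moreover have "card (?cut S) = card S * (n - card S)"
      using S by (simp add: card_cartesian_product card_Diff_subset)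
    moreover have "{E \<in> Pow ?PE. E \<inter> ?cut S = {}} = {E. E \<subseteq> ?PE \<and> E \<inter> ?cut S = {}}"
      by blast
    ultimately show "(\<Sum>E\<in>Pow ?PE. ?avoid S E) = (1 - p) ^ (card S * (n - card S))"
      using sum_gnp_prob_disjoint[of "?cut S" n p]
        sum.inter_filter[of "Pow ?PE" "gnp_prob n p" "\<lambda>E. E \<inter> ?cut S = {}"]
      by (simp add: finite_possible_edges)
  qed simp
  finally show ?thesis .
qed

lemma one_minus_R_le_binomial_sum:
  assumes "0 \<le> p" "p \<le> 1"
  shows "1 - R n p \<le> (\<Sum>k\<in>{1..<n}. real (n - 1 choose k) * (1 - p) ^ (k * (n - k)))"
proof -
  have "{1..card {1..<n}} = {1..<n}" by auto
  then show ?thesis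
    using one_minus_R_le_sum_closed_sets[OF assms, of n]
      sum_Pow_nonempty_card[of "{1..<n}" "\<lambda>k. (1 - p) ^ (k * (n - k))"] by simp
qed

lemma binomial_le_power_min:
  assumes "k < n"
  shows "n - 1 choose k \<le> n ^ min k (n - k)"
proof (cases "k \<le> n - k")
  case True
  have "n - 1 choose k \<le> (n - 1) ^ k" by (rule binomial_le_pow) (use assms in simp)
  also have "\<dots> \<le> n ^ k" by (simp add: power_mono)
  finally show ?thesis using True by simp
next
  case False
  have "n - 1 choose k = n - 1 choose (n - 1 - k)" by (rule binomial_symmetric) (use assms in simp)
  also have "\<dots> \<le> (n - 1) ^ (n - 1 - k)" by (rule binomial_le_pow) simp
  also have "\<dots> \<le> n ^ (n - 1 - k)" by (simp add: power_mono)
  also have "\<dots> \<le> n ^ (n - k)" using assms by (intro power_increasing) auto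
  finally show ?thesis using False by simp
qed

lemma binomial_cut_term_le_powr:
  fixes n k :: nat and p c m :: real
  assumes "1 \<le> k" "k < n" "c * ln n / n \<le> p" "p \<le> 1"
  defines "m \<equiv> real (min k (n - k))"
  shows "real (n - 1 choose k) * (1 - p) ^ (k * (n - k))
           \<le> real n powr (m * (1 - c * (real n - m) / real n))"
proof -
  have n: "real n > 0" using assms by simp
  have km: "real k * real (n - k) = m * (real n - m)"
    using assms unfolding m_def by (simp add: min_def of_nat_diff)
  have "real (n - 1 choose k) \<le> real n ^ min k (n - k)"
    using binomial_le_power_min[OF assms(2)] by (metis of_nat_le_iff of_nat_power)
  also have "\<dots> = exp (m * ln n)"
    using n unfolding m_def by (simp add: exp_of_nat_mult)
  finally have choose: "real (n - 1 choose k) \<le> exp (m * ln n)" .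
  have "(1 - p) ^ (k * (n - k)) \<le> exp (- p) ^ (k * (n - k))"
    using assms(4) exp_ge_add_one_self[of "- p"] by (intro power_mono) auto
  also have "\<dots> = exp (- p * (m * (real n - m)))"
    by (simp add: exp_of_nat_mult[symmetric] km mult.commute)
  also have "\<dots> \<le> exp (- (c * ln n / n) * (m * (real n - m)))"
    using assms(3) unfolding m_def by (intro exp_le_cancel_iff[THEN iffD2] mult_right_mono) auto
  finally have power: "(1 - p) ^ (k * (n - k)) \<le> exp (- (c * ln n / n) * (m * (real n - m)))" .
  have "real (n - 1 choose k) * (1 - p) ^ (k * (n - k))
      \<le> exp (m * ln n) * exp (- (c * ln n / n) * (m * (real n - m)))"
    using choose power assms(4) by (intro mult_mono) auto
  also have "\<dots> = real n powr (m * (1 - c * (real n - m) / real n))"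
    using n by (simp add: powr_def exp_add[symmetric] algebra_simps)
  finally show ?thesis .
qed

lemma cut_exponent_le_large:
  fixes m n c d :: real
  assumes "0 < n" "0 \<le> m" "2 * m \<le> n" "0 \<le> d" "2 + 2 * d \<le> c"
  shows "m * (1 - c * (n - m) / n) \<le> - d * m"
proof -
  have "c * m \<le> c * (n - m)"
    using assms by (intro mult_left_mono) auto
  then have "c / 2 \<le> c * (n - m) / n"
    using assms by (simp add: field_simps)
  then have "1 - c * (n - m) / n \<le> - d"
    using assms by simp
  then show ?thesis
    using mult_left_mono[OF _ assms(2)] by (metis minus_mult_commute mult.commute)
qed

lemma cut_exponent_le_small:
  fixes m n c d :: real
  assumes "0 < n" "1 \<le> m" "c * m \<le> d * n" "0 \<le> d" "2 + 2 * d \<le> c"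
  shows "m * (1 - c * (n - m) / n) \<le> - (1 + d)"
proof -
  have "(2 + d) * n \<le> (c - d) * n"
    using assms by (intro mult_right_mono) auto
  then have "2 + d \<le> c * (n - m) / n"
    using assms by (simp add: field_simps)
  then have e: "1 - c * (n - m) / n \<le> - (1 + d)"
    by simp
  have "1 - c * (n - m) / n \<le> 0"
    using e assms(4) by linarith
  then have "m * (1 - c * (n - m) / n) \<le> 1 - c * (n - m) / n"
    using mult_right_mono_neg[OF assms(2)] by fastforce
  also note e
  finally show ?thesis .
qed

lemma binomial_cut_term_le:
  fixes n k K :: nat and p c d :: real
  assumes k: "1 \<le> k" "k < n" and d: "0 \<le> d" "2 + 2 * d \<le> c" "3 \<le> d * K"
    and n: "c * K \<le> d * n" and p: "c * ln n / n \<le> p" "p \<le> 1"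
  shows "real (n - 1 choose k) * (1 - p) ^ (k * (n - k))
           \<le> (if min k (n - k) < K then real n powr - (1 + d) else real n powr - 3)"
proof -
  define m where "m = real (min k (n - k))"
  have n1: "1 \<le> real n" using k by simp
  have exponent_bound: "real (n - 1 choose k) * (1 - p) ^ (k * (n - k))
      \<le> real n powr (m * (1 - c * (real n - m) / real n))"
    unfolding m_def by (rule binomial_cut_term_le_powr[OF k p])
  show ?thesis
  proof (cases "min k (n - k) < K")
    case True
    have "c * m \<le> c * K"
      using True d unfolding m_def by (intro mult_left_mono) auto
    then have "c * m \<le> d * n" using n by linarith
    then have "m * (1 - c * (real n - m) / real n) \<le> - (1 + d)"
      using k d unfolding m_def by (intro cut_exponent_le_small) auto
    then have "real n powr (m * (1 - c * (real n - m) / real n)) \<le> real n powr - (1 + d)"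
      using n1 by (rule powr_mono)
    then show ?thesis using True exponent_bound by simp
  next
    case False
    have "m * (1 - c * (real n - m) / real n) \<le> - d * m"
      using k d unfolding m_def by (intro cut_exponent_le_large) auto
    also have "\<dots> \<le> - (d * K)"
      using False d unfolding m_def by (simp add: mult_left_mono not_less)
    also have "\<dots> \<le> - 3" using d by linarith
    finally have "real n powr (m * (1 - c * (real n - m) / real n)) \<le> real n powr - 3"
      using n1 by (rule powr_mono)
    then show ?thesis using False exponent_bound by simp
  qed
qed

lemma binomial_cut_sum_le:
  fixes n K :: nat and p c d :: real
  assumes d: "0 \<le> d" "2 + 2 * d \<le> c" "3 \<le> d * K"
    and n: "c * K \<le> d * n" and p: "c * ln n / n \<le> p" "p \<le> 1"
  shows "(\<Sum>k\<in>{1..<n}. real (n - 1 choose k) * (1 - p) ^ (k * (n - k)))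
           \<le> 2 * K * real n powr - (1 + d) + n * real n powr - 3"
proof -
  let ?a = "real n powr - (1 + d)" and ?b = "real n powr - 3"
  let ?small = "{k \<in> {1..<n}. min k (n - k) < K}"
  have "(\<Sum>k\<in>{1..<n}. real (n - 1 choose k) * (1 - p) ^ (k * (n - k)))
      \<le> (\<Sum>k\<in>{1..<n}. if min k (n - k) < K then ?a else ?b)"
    using binomial_cut_term_le[OF _ _ d n p] by (intro sum_mono) auto
  also have "\<dots> \<le> (\<Sum>k\<in>{1..<n}. (if min k (n - k) < K then ?a else 0) + ?b)"
    by (intro sum_mono) auto
  also have "\<dots> = card ?small * ?a + (n - 1) * ?b"
    by (simp add: sum.distrib sum.inter_filter[symmetric])
  also have "\<dots> \<le> 2 * K * ?a + n * ?b"
  proof (intro add_mono mult_right_mono)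
    have "?small \<subseteq> {..<K} \<union> {n - K..<n}" by auto
    then have "card ?small \<le> card ({..<K} \<union> {n - K..<n})" by (intro card_mono) auto
    also have "\<dots> \<le> 2 * K" using card_Un_le[of "{..<K}" "{n - K..<n}"] by simp
    finally show "real (card ?small) \<le> 2 * K" by linarith
  qed auto
  finally show ?thesis .
qed

lemma cut_bound_le_three_halves_div:
  fixes n d :: real and K :: nat
  assumes "1 \<le> n" "4 * K \<le> n powr d"
  shows "2 * K * n powr - (1 + d) + n * n powr - 3 \<le> 1.5 / n"
proof -
  have "n powr - (1 + d) = 1 / (n * n powr d)"
    using assms by (simp add: powr_minus_divide powr_add del: minus_add_distrib)
  then have "2 * K * n powr - (1 + d) = (2 * K / n powr d) / n" by simp
  also have "\<dots> \<le> (1 / 2) / n"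
    using assms by (intro divide_right_mono) (auto simp: divide_simps)
  finally have small: "2 * K * n powr - (1 + d) \<le> 0.5 / n" by simp
  have "n * n powr - 3 = 1 / n / n"
    using assms by (simp add: powr_minus powr_numeral divide_simps power3_eq_cube)
  also have "\<dots> \<le> 1 / n"
    using assms by (simp add: divide_simps)
  finally show ?thesis using small by simp
qed

theorem lemma22:
  fixes c :: real
  assumes "c > 2"
  shows "\<exists>N::nat. \<forall>n\<ge>N. \<forall>p::real. c * ln (real n) / real n \<le> p \<and> p \<le> 1 \<longrightarrow>
           R n p \<ge> 1 - 1.5 / real n"
proof -
  define d where "d = c / 2 - 1"
  have d: "0 < d" "2 + 2 * d \<le> c" using assms by (auto simp: d_def)
  obtain K :: nat where K: "3 \<le> d * K"
    using real_arch_simple[of "3 / d"] d by (auto simp: field_simps)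
  have "eventually (\<lambda>n::nat. c * K \<le> d * n) sequentially"
    using d(1) by real_asymp
  moreover have "eventually (\<lambda>n::nat. 4 * K \<le> real n powr d) sequentially"
    using d(1) by real_asymp
  moreover have "eventually (\<lambda>n::nat. 1 \<le> n) sequentially"
    by (rule eventually_ge_at_top)
  ultimately have "eventually (\<lambda>n::nat. c * K \<le> d * n \<and> 4 * K \<le> real n powr d \<and> 1 \<le> n) sequentially"
    by eventually_elim auto
  then obtain N where N: "\<And>n. N \<le> n \<Longrightarrow> c * K \<le> d * n \<and> 4 * K \<le> real n powr d \<and> 1 \<le> n"
    by (auto simp: eventually_sequentially)
  show ?thesis
  proof (intro exI allI impI)
    fix n :: nat and p :: real
    assume "N \<le> n" and p: "c * ln n / n \<le> p \<and> p \<le> 1"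
    note n = N[OF \<open>N \<le> n\<close>]
    have "0 \<le> c * ln n / n" using assms n by simp
    then have "1 - R n p \<le> (\<Sum>k\<in>{1..<n}. real (n - 1 choose k) * (1 - p) ^ (k * (n - k)))"
      using p by (intro one_minus_R_le_binomial_sum) auto
    also have "\<dots> \<le> 2 * K * real n powr - (1 + d) + n * real n powr - 3"
      using d K n p by (intro binomial_cut_sum_le) auto
    also have "\<dots> \<le> 1.5 / n"
      using n by (intro cut_bound_le_three_halves_div) auto
    finally show "R n p \<ge> 1 - 1.5 / n" by simp
  qed
qed

end
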